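(* Let $\mathcal A\in\mathbb C^{n_1\times n_1\times n_3}$ with $\mathrm{ind}(\mathcal A)=k$ and let $\mathcal A^-$ be a fixed element of $\mathcal A\{1\}$. If $\mathcal A^{-,D}$ is idempotent, then: (a) $\mathcal A^k=\mathcal A^{k+1}$, and moreover $\mathcal A^D\mathcal A^k=\mathcal A^k$; (b) $(\mathcal A^{-,D})^k=(\mathcal A^{-,D})^k\mathcal A$, and moreover $(\mathcal A^{-,D})^m=(\mathcal A^{-,D})^m\mathcal A$ for every positive integer $m$; (c) $\mathcal A^{-,D}=(\mathcal A^{-,D})^m\mathcal A^m$ for every positive integer $m$; (d) $\mathcal A^k\mathcal A^{-,D}=\mathcal A^k$.
   Context: Fix a nonsingular matrix $M\in\mathbb C^{n_3\times n_3}$. For $\mathcal C\in\mathbb C^{n_1\times n_2\times n_3}$ let $\widehat{\mathcal C}=\mathcal C\times_3M$, i.e. $\widehat{\mathcal C}_{ijk}=\sum_{l=1}^{n_3}M_{kl}\mathcal C_{ijl}$, and let $\widehat{\mathcal C}^{(i)}$ denote its $i$-th frontal slice. The M-product $\mathcal C\star_M\mathcal D$ of $\mathcal C\in\mathbb C^{n_1\times n_2\times n_3}$ and $\mathcal D\in\mathbb C^{n_2\times l\times n_3}$ is the unique tensor with $\widehat{\mathcal C\star_M\mathcal D}^{(i)}=\widehat{\mathcal C}^{(i)}\widehat{\mathcal D}^{(i)}$ for all $i\in[n_3]$. Juxtaposition of tensors denotes the M-product; powers are M-product powers with $\mathcal A^0=\mathcal I$ where $\widehat{\mathcal I}^{(i)}=I_{n_1}$.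 $\mathcal A\{1\}$ is the set of all $\mathcal W$ with $\mathcal A\mathcal W\mathcal A=\mathcal A$. The index $\mathrm{ind}(\mathcal A)$ is $\max_{i}\mathrm{ind}(\widehat{\mathcal A}^{(i)})$, where the index of a square matrix $B$ is the least $k\ge0$ with $\mathrm{rank}(B^{k+1})=\mathrm{rank}(B^k)$. For $\mathrm{ind}(\mathcal A)=k$, the Drazin inverse $\mathcal A^D$ is the unique $\mathcal W$ with $\mathcal W\mathcal A^{k+1}=\mathcal A^k$, $\mathcal W\mathcal A\mathcal W=\mathcal W$, $\mathcal A\mathcal W=\mathcal W\mathcal A$. The 1-D inverse is $\mathcal A^{-,D}=\mathcal A^-\mathcal A\mathcal A^D$; it is idempotent if $(\mathcal A^{-,D})^2=\mathcal A^{-,D}$. *)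

theory Defs
  imports "HOL-Analysis.Analysis"
begin

text \<open>A third-order tensor in C^(n1 x n2 x n3) is represented as its family of frontal
slices: T $ i is the i-th frontal slice (an n1 x n2 matrix), indices of the third mode
range over the finite type 'k (so n3 = CARD('k)).\<close>

definition mode3 :: "complex^'k^'k \<Rightarrow> complex^'n^'m^'k \<Rightarrow> complex^'n^'m^'k" where
  "mode3 M C = (\<chi> k. \<chi> i j. \<Sum>l\<in>UNIV. M$k$l * C$l$i$j)"

definition that :: "complex^'k^'k \<Rightarrow> complex^'n^'m^'k \<Rightarrow> complex^'n^'m^'k" where
  "that M C = mode3 M C"

text \<open>M-product: the unique tensor whose transformed slices are the products of the
transformed slices (M assumed nonsingular).\<close>
definition mprod :: "complex^'k^'k \<Rightarrow> complex^'p^'m^'k \<Rightarrow> complex^'n^'p^'k \<Rightarrow> complex^'n^'m^'k" where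
  "mprod M C D = (THE T. \<forall>i. (that M T)$i = (that M C)$i ** (that M D)$i)"

definition tid :: "complex^'k^'k \<Rightarrow> complex^'n^'n^'k" where
  "tid M = (THE T. \<forall>i. (that M T)$i = mat 1)"

primrec tpow :: "complex^'k^'k \<Rightarrow> complex^'n^'n^'k \<Rightarrow> nat \<Rightarrow> complex^'n^'n^'k" where
  "tpow M A 0 = tid M"
| "tpow M A (Suc m) = mprod M A (tpow M A m)"

primrec mpow :: "'a::field^'n^'n \<Rightarrow> nat \<Rightarrow> 'a^'n^'n" where
  "mpow B 0 = mat 1"
| "mpow B (Suc m) = B ** mpow B m"

definition mat_index :: "'a::field^'n^'n \<Rightarrow> nat" where
  "mat_index B = (LEAST k. rank (mpow B (Suc k)) = rank (mpow B k))"

definition tind :: "complex^'k^'k \<Rightarrow> complex^'n^'n^'k \<Rightarrow> nat" where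
  "tind M A = Max (range (\<lambda>i. mat_index ((that M A)$i)))"

definition drazin :: "complex^'k^'k \<Rightarrow> complex^'n^'n^'k \<Rightarrow> complex^'n^'n^'k" where
  "drazin M A = (THE W. mprod M W (tpow M A (tind M A + 1)) = tpow M A (tind M A)
       \<and> mprod M (mprod M W A) W = W \<and> mprod M A W = mprod M W A)"

definition one_inverses :: "complex^'k^'k \<Rightarrow> complex^'n^'n^'k \<Rightarrow> (complex^'n^'n^'k) set" where
  "one_inverses M A = {W. mprod M (mprod M A W) A = A}"

definition oneD :: "complex^'k^'k \<Rightarrow> complex^'n^'n^'k \<Rightarrow> complex^'n^'n^'k \<Rightarrow> complex^'n^'n^'k" where
  "oneD M A Am = mprod M (mprod M Am A) (drazin M A)"

end

theory Submission
  imports Defs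
begin

text \<open>The transform \<open>C \<mapsto> C \<times>\<^sub>3 M\<close> turns the M-product into the slice-wise matrix
  product, so tensors under \<open>\<star>\<^sub>M\<close> form a monoid and everything reduces to monoid algebra.
  For each frontal slice the rank of its powers is stable from its index on, which yields
  factorisations \<open>A\<^sup>k = Z A\<^sup>k\<^sup>+\<^sup>1 = A\<^sup>k\<^sup>+\<^sup>1 Y\<close>; in any monoid these produce a unique
  Drazin inverse \<open>W\<close>. If \<open>X = A\<^sup>- A W\<close> is idempotent, then from \<open>A X = A W\<close> we get
  \<open>A W = A X X = W A X = W A W = W\<close>. Hence \<open>A\<^sup>k\<^sup>+\<^sup>1 = A W A\<^sup>k\<^sup>+\<^sup>1 = W A\<^sup>k\<^sup>+\<^sup>1 = A\<^sup>k\<close>, \<open>X A = X\<close> and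
  \<open>X\<^sup>m = X\<close> for \<open>m > 0\<close>, from which all four claims follow.\<close>

section \<open>Drazin inverses in monoids\<close>

context monoid
begin

primrec pow :: "'a \<Rightarrow> nat \<Rightarrow> 'a" where
  pow_0: "pow a 0 = \<^bold>1"
| pow_Suc: "pow a (Suc n) = a \<^bold>* pow a n"

declare pow_Suc [simp del]

lemma pow_add: "pow a (m + n) = pow a m \<^bold>* pow a n"
  by (induct m) (simp_all add: pow_Suc assoc)

lemma pow_Suc_right: "pow a (Suc n) = pow a n \<^bold>* a"
  using pow_add[of a n 1] by (simp add: pow_Suc)

lemma pow_commute: "a \<^bold>* b = b \<^bold>* a \<Longrightarrow> pow a n \<^bold>* b = b \<^bold>* pow a n"
  by (induct n) (simp_all add: pow_Suc, metis assoc)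

lemma pow_idem:
  assumes "x \<^bold>* x = x" and "0 < n"
  shows "pow x n = x"
  using assms(2) by (induct n rule: nat_induct_non_zero) (simp_all add: pow_Suc assms(1))

lemma absorb_pow_right: "x \<^bold>* a = x \<Longrightarrow> x \<^bold>* pow a n = x"
  by (induct n) (simp_all add: pow_Suc flip: assoc)

lemma left_factor_pow_mono:
  assumes "pow a j = u \<^bold>* pow a (Suc j)" and "j \<le> m"
  shows "pow a m = u \<^bold>* pow a (Suc m)"
proof -
  have "pow a m = pow a j \<^bold>* pow a (m - j)"
    using \<open>j \<le> m\<close> by (simp flip: pow_add)
  also have "\<dots> = u \<^bold>* (pow a (Suc j) \<^bold>* pow a (m - j))"
    by (simp only: assms(1) assoc)
  also have "\<dots> = u \<^bold>* pow a (Suc m)"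
    using \<open>j \<le> m\<close> by (simp flip: pow_add)
  finally show ?thesis .
qed

lemma right_factor_pow_mono:
  assumes "pow a j = pow a (Suc j) \<^bold>* v" and "j \<le> m"
  shows "pow a m = pow a (Suc m) \<^bold>* v"
proof -
  have "pow a m = pow a (m - j) \<^bold>* pow a j"
    using \<open>j \<le> m\<close> by (simp flip: pow_add)
  also have "\<dots> = pow a (m - j) \<^bold>* pow a (Suc j) \<^bold>* v"
    by (simp only: assms(1) assoc)
  also have "\<dots> = pow a (Suc m) \<^bold>* v"
    using \<open>j \<le> m\<close> by (simp flip: pow_add)
  finally show ?thesis .
qed

lemma left_factor_pow_iter:
  assumes "pow a k = u \<^bold>* pow a (Suc k)"
  shows "pow a k = pow u i \<^bold>* pow a (k + i)"
proof (induct i)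
  case (Suc i)
  have "pow a (k + i) = u \<^bold>* pow a (k + Suc i)"
    using left_factor_pow_mono[OF assms, of "k + i"] by simp
  then have "pow a k = pow u i \<^bold>* u \<^bold>* pow a (k + Suc i)"
    using Suc by (simp only: assoc)
  then show ?case
    by (simp only: pow_Suc_right)
qed simp

lemma right_factor_pow_iter:
  assumes "pow a k = pow a (Suc k) \<^bold>* v" and "k \<le> m"
  shows "pow a m = pow a (m + i) \<^bold>* pow v i"
proof (induct i)
  case (Suc i)
  have "pow a (m + i) = pow a (m + Suc i) \<^bold>* v"
    using right_factor_pow_mono[OF assms(1), of "m + i"] \<open>k \<le> m\<close> by simp
  then have "pow a m = pow a (m + Suc i) \<^bold>* (v \<^bold>* pow v i)"
    using Suc by (simp only: assoc)
  then show ?case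
    by (simp only: pow_Suc)
qed simp

lemma right_factor_pow_descend:
  assumes left: "pow a k = u \<^bold>* pow a (Suc k)" and "k \<le> m"
    and right: "pow a m = pow a (Suc m) \<^bold>* v"
  shows "pow a k = pow a (Suc k) \<^bold>* v"
proof -
  have ak: "pow a k = pow u (m - k) \<^bold>* pow a m"
    using left_factor_pow_iter[OF left, of "m - k"] \<open>k \<le> m\<close> by simp
  have am: "pow a m = pow a m \<^bold>* a \<^bold>* v"
    using right by (simp only: pow_Suc_right)
  have "pow a k = pow u (m - k) \<^bold>* (pow a m \<^bold>* a \<^bold>* v)"
    unfolding ak by (rule arg_cong[OF am])
  also have "\<dots> = pow a (Suc k) \<^bold>* v"
    by (simp only: ak assoc pow_Suc_right)
  finally show ?thesis .
qed

definition drazin_inverse :: "'a \<Rightarrow> nat \<Rightarrow> 'a \<Rightarrow> bool" where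
  "drazin_inverse a k w \<longleftrightarrow>
     w \<^bold>* pow a (k + 1) = pow a k \<and> w \<^bold>* a \<^bold>* w = w \<and> a \<^bold>* w = w \<^bold>* a"

text \<open>Drazin's original construction.\<close>
lemma drazin_inverse_exists:
  assumes left: "pow a k = u \<^bold>* pow a (Suc k)" and right: "pow a k = pow a (Suc k) \<^bold>* v"
  shows "drazin_inverse a k (pow a k \<^bold>* pow v (Suc k))"
proof -
  define w where "w = pow a k \<^bold>* pow v (Suc k)"
  define p where "p = pow u (Suc k)"
  have left_iter: "pow a k = p \<^bold>* pow a (k + Suc k)"
    unfolding p_def by (rule left_factor_pow_iter[OF left])
  have right_iter_k: "pow a k = pow a (k + Suc k) \<^bold>* pow v (Suc k)"
    by (rule right_factor_pow_iter[OF right order_refl])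
  have right_iter_Suc_k: "pow a (Suc k) = pow a (k + Suc k) \<^bold>* pow v k"
    using right_factor_pow_iter[OF right, of "Suc k" k] by simp
  have "a \<^bold>* w = pow a (Suc k) \<^bold>* v \<^bold>* pow v k"
    unfolding w_def by (simp only: pow_Suc assoc)
  also have "\<dots> = pow a k \<^bold>* pow v k"
    by (simp only: flip: right)
  finally have aw: "a \<^bold>* w = pow a k \<^bold>* pow v k" .
  have "w \<^bold>* a = p \<^bold>* (pow a (k + Suc k) \<^bold>* pow v (Suc k)) \<^bold>* a"
    unfolding w_def by (subst left_iter) (simp only: assoc)
  also have "\<dots> = p \<^bold>* pow a (Suc k)"
    by (simp only: flip: right_iter_k) (simp only: assoc pow_Suc_right)
  finally have wa: "w \<^bold>* a = p \<^bold>* pow a (Suc k)" .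
  also have "\<dots> = pow a k \<^bold>* pow v k"
    by (subst right_iter_Suc_k) (simp only: left_iter assoc)
  finally have commute: "a \<^bold>* w = w \<^bold>* a"
    using aw by simp
  have "w \<^bold>* pow a (k + 1) = w \<^bold>* a \<^bold>* pow a k"
    by (simp add: pow_Suc assoc)
  also have "\<dots> = p \<^bold>* pow a (k + Suc k)"
    by (simp add: wa assoc flip: pow_add)
  finally have power: "w \<^bold>* pow a (k + 1) = pow a k"
    by (simp only: flip: left_iter)
  have "w \<^bold>* a \<^bold>* w = p \<^bold>* (pow a (Suc k) \<^bold>* pow a k) \<^bold>* pow v (Suc k)"
    unfolding wa by (simp only: w_def assoc)
  also have "\<dots> = p \<^bold>* pow a (k + Suc k) \<^bold>* pow v (Suc k)"
    by (simp flip: pow_add)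
  finally have absorb: "w \<^bold>* a \<^bold>* w = w"
    unfolding w_def by (simp only: flip: left_iter)
  show ?thesis
    using power absorb commute unfolding drazin_inverse_def w_def by blast
qed

lemma drazin_inverse_eq_pow:
  assumes "drazin_inverse a k w"
  shows "w = pow w (Suc k) \<^bold>* pow a k" and "w = pow a k \<^bold>* pow w (Suc k)"
proof -
  have commute: "a \<^bold>* w = w \<^bold>* a"
    using assms by (simp add: drazin_inverse_def)
  have "w \<^bold>* (w \<^bold>* a) = w \<^bold>* a \<^bold>* w"
    by (simp only: assoc commute)
  then have absorb: "w \<^bold>* (w \<^bold>* a) = w"
    using assms by (simp add: drazin_inverse_def)
  have "w = pow w (Suc i) \<^bold>* pow a i" for i
  proof (induct i)
    case (Suc i)
    have "pow w (Suc (Suc i)) \<^bold>* pow a (Suc i) = pow w i \<^bold>* (w \<^bold>* (w \<^bold>* a)) \<^bold>* pow a i"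
      by (simp only: pow_Suc_right[of w] pow_Suc[of a] assoc)
    also have "\<dots> = pow w (Suc i) \<^bold>* pow a i"
      by (simp only: absorb pow_Suc_right)
    finally show ?case
      using Suc by simp
  qed (simp add: pow_Suc)
  then show first: "w = pow w (Suc k) \<^bold>* pow a k" .
  have "w \<^bold>* pow a k = pow a k \<^bold>* w"
    by (rule pow_commute[OF commute, symmetric])
  then show "w = pow a k \<^bold>* pow w (Suc k)"
    using first pow_commute by metis
qed

lemma drazin_inverse_absorb:
  assumes "drazin_inverse a k w"
  shows "a \<^bold>* w \<^bold>* pow a k = pow a k" and "pow a k \<^bold>* (a \<^bold>* w) = pow a k"
proof -
  have power: "w \<^bold>* pow a (k + 1) = pow a k" and commute: "a \<^bold>* w = w \<^bold>* a"
    using assms by (simp_all add: drazin_inverse_def)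
  show left: "a \<^bold>* w \<^bold>* pow a k = pow a k"
    using power by (simp add: commute assoc pow_Suc)
  have "a \<^bold>* (a \<^bold>* w) = a \<^bold>* w \<^bold>* a"
    using commute by (metis assoc)
  then show "pow a k \<^bold>* (a \<^bold>* w) = pow a k"
    using left pow_commute by metis
qed

lemma drazin_inverse_unique:
  assumes w1: "drazin_inverse a k w1" and w2: "drazin_inverse a k w2"
  shows "w1 = w2"
proof -
  have "w1 = pow w1 (Suc k) \<^bold>* (pow a k \<^bold>* (a \<^bold>* w2))"
    by (simp only: drazin_inverse_absorb(2)[OF w2] flip: drazin_inverse_eq_pow(1)[OF w1])
  also have "\<dots> = w1 \<^bold>* a \<^bold>* w2"
    by (simp only: assoc flip: assoc[of "pow w1 (Suc k)"] drazin_inverse_eq_pow(1)[OF w1])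
  also have "\<dots> = a \<^bold>* w1 \<^bold>* pow a k \<^bold>* pow w2 (Suc k)"
    using w1 by (simp add: drazin_inverse_def assoc flip: drazin_inverse_eq_pow(2)[OF w2])
  also have "\<dots> = w2"
    by (simp only: drazin_inverse_absorb(1)[OF w1] flip: drazin_inverse_eq_pow(2)[OF w2])
  finally show ?thesis .
qed

lemma drazin_inverse_fixed_if_one_drazin_idempotent:
  assumes D: "drazin_inverse a k w" and inner: "a \<^bold>* g \<^bold>* a = a"
    and idem: "g \<^bold>* a \<^bold>* w \<^bold>* (g \<^bold>* a \<^bold>* w) = g \<^bold>* a \<^bold>* w"
  shows "a \<^bold>* w = w"
proof -
  have ax: "a \<^bold>* (g \<^bold>* a \<^bold>* w) = a \<^bold>* w"
    by (simp only: inner flip: assoc)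
  have "a \<^bold>* w = a \<^bold>* w \<^bold>* (g \<^bold>* a \<^bold>* w)"
    using ax idem by (metis assoc)
  also have "\<dots> = w \<^bold>* (a \<^bold>* g \<^bold>* a) \<^bold>* w"
    using D by (simp add: drazin_inverse_def ax assoc)
  also have "\<dots> = w"
    using D by (simp add: drazin_inverse_def inner)
  finally show ?thesis .
qed

lemma pow_Suc_index_eq_if_drazin_fixed:
  assumes D: "drazin_inverse a k w" and fixed: "a \<^bold>* w = w"
  shows "pow a (Suc k) = pow a k"
proof -
  have "pow a (Suc k) = a \<^bold>* (w \<^bold>* pow a (k + 1))"
    using D by (simp add: drazin_inverse_def pow_Suc)
  also have "\<dots> = w \<^bold>* pow a (k + 1)"
    by (simp only: fixed flip: assoc)
  also have "\<dots> = pow a k"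
    using D by (simp add: drazin_inverse_def)
  finally show ?thesis .
qed

lemma one_drazin_idempotent_consequences:
  assumes D: "drazin_inverse a k w" and inner: "a \<^bold>* g \<^bold>* a = a"
    and idem: "g \<^bold>* a \<^bold>* w \<^bold>* (g \<^bold>* a \<^bold>* w) = g \<^bold>* a \<^bold>* w"
  defines "x \<equiv> g \<^bold>* a \<^bold>* w"
  shows "(pow a k = pow a (k + 1) \<and> w \<^bold>* pow a k = pow a k)
    \<and> (pow x k = pow x k \<^bold>* a \<and> (\<forall>m::nat. m > 0 \<longrightarrow> pow x m = pow x m \<^bold>* a))
    \<and> (\<forall>m::nat. m > 0 \<longrightarrow> x = pow x m \<^bold>* pow a m)
    \<and> pow a k \<^bold>* x = pow a k"
proof -
  have fixed: "a \<^bold>* w = w"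
    using drazin_inverse_fixed_if_one_drazin_idempotent[OF D inner idem] .
  have commute: "a \<^bold>* w = w \<^bold>* a"
    using D by (simp add: drazin_inverse_def)
  have index: "pow a (Suc k) = pow a k"
    using pow_Suc_index_eq_if_drazin_fixed[OF D fixed] .
  have wak: "w \<^bold>* pow a k = pow a k"
    using D index by (simp add: drazin_inverse_def)
  have wa: "w \<^bold>* a = w"
    using fixed commute by simp
  have xa: "x \<^bold>* a = x"
    unfolding x_def by (simp only: assoc wa)
  have xpow: "pow x m = x" if "0 < m" for m
    using pow_idem idem that unfolding x_def by blast
  have xk: "pow x k = pow x k \<^bold>* a"
  proof (cases "k = 0")
    case True
    then have "a = \<^bold>1"
      using index by (simp add: pow_Suc)
    with True show ?thesis
      by simp
  qed (simp add: xpow xa)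
  have aka: "pow a k \<^bold>* a = pow a k"
    using index by (simp only: pow_Suc_right)
  have "pow a k \<^bold>* x = pow a k \<^bold>* (a \<^bold>* g \<^bold>* a) \<^bold>* w"
    unfolding x_def using aka by (metis assoc)
  also have "\<dots> = w \<^bold>* pow a k"
    by (simp only: inner aka pow_commute[OF commute])
  finally have akx: "pow a k \<^bold>* x = pow a k"
    using wak by simp
  show ?thesis
    using index wak xk xpow xa absorb_pow_right[OF xa] akx by simp
qed

end

section \<open>Powers of square matrices\<close>

lemma vector_matrix_mult_sum_rows: "c v* A = (\<Sum>i\<in>UNIV. c $ i *s row i A)"
  for A :: "'a::comm_semiring_1^'n^'m"
  by (simp add: vec_eq_iff vector_matrix_mult_def sum_component row_def mult.commute)

lemma span_rows_eq_range: "vec.span (rows A) = range (\<lambda>c. c v* A)"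
  for A :: "'a::field^'n^'m"
proof
  have "vec.subspace (range ((*v) (transpose A)))"
    using matrix_vector_mul_linear_gen
    by (metis vec.subspace_UNIV module_hom_iff_linear module_hom.subspace_image)
  then have "vec.subspace (range (\<lambda>c. c v* A))"
    by simp
  moreover have "row i A = axis i 1 v* A" for i
    by (simp add: vec_eq_iff vector_matrix_mult_def axis_def row_def if_distrib if_distribR cong del: if_weak_cong)
  then have "rows A \<subseteq> range (\<lambda>c. c v* A)"
    by (auto simp: rows_def)
  ultimately show "vec.span (rows A) \<subseteq> range (\<lambda>c. c v* A)"
    by (rule vec.span_minimal[rotated])
  have "c v* A \<in> vec.span (rows A)" for c
    unfolding vector_matrix_mult_sum_rows
    by (intro vec.span_sum vec.span_scale vec.span_base) (auto simp: rows_def)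
  then show "range (\<lambda>c. c v* A) \<subseteq> vec.span (rows A)"
    by blast
qed

lemma matrix_matrix_mult_nth: "(B ** C) $ i = B $ i v* C"
  by (simp add: vec_eq_iff row_def matrix_matrix_mult_def vector_matrix_mult_def mult.commute)

lemma rows_mult_subset_span: "rows (B ** C) \<subseteq> vec.span (rows C)"
  for C :: "'a::field^'n^'m"
  unfolding span_rows_eq_range by (auto simp: rows_def row_def matrix_matrix_mult_nth)

lemma rank_mul_le_right_gen: "rank (B ** C) \<le> rank C"
  for C :: "'a::field^'n^'m"
  unfolding row_rank_def_gen by (rule vec.dim_mono[OF rows_mult_subset_span])

lemma rank_mult_eq_left_factor:
  fixes B :: "'a::field^'m^'p" and C :: "'a^'n^'m"
  assumes "rank (B ** C) = rank C"
  obtains Z where "C = Z ** (B ** C)"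
proof -
  have "vec.span (rows (B ** C)) = vec.span (vec.span (rows C))"
    by (rule vec.dim_eq_span[OF rows_mult_subset_span]) (use assms in \<open>simp add: vec.dim_span row_rank_def_gen\<close>)
  then have spans: "vec.span (rows (B ** C)) = vec.span (rows C)"
    by (simp only: vec.span_span)
  have "row l C \<in> vec.span (rows (B ** C))" for l
    unfolding spans by (rule vec.span_base) (auto simp: rows_def)
  then have "\<forall>l. \<exists>c. C $ l = c v* (B ** C)"
    unfolding span_rows_eq_range by (simp add: row_def image_iff)
  then obtain z where z: "\<And>l. C $ l = z l v* (B ** C)"
    by metis
  have "C = (\<chi> l. z l) ** (B ** C)"
    by (rule iffD2[OF vec_eq_iff]) (simp add: z matrix_matrix_mult_nth)
  then show ?thesis ..
qed

interpretation matrix_mult: monoid "(**) :: 'a::semiring_1^'n^'n \<Rightarrow> _ \<Rightarrow> _" "mat 1"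
  by unfold_locales (simp_all add: matrix_mul_assoc)

lemma mpow_eq_pow: "mpow B m = matrix_mult.pow B m"
  by (induct m) (simp_all add: matrix_mult.pow_Suc)

lemma transpose_mpow: "transpose (mpow B m) = mpow (transpose B) m"
  for B :: "'a::field^'n^'n"
proof (induct m)
  case (Suc m)
  have "transpose (mpow B (Suc m)) = mpow (transpose B) m ** transpose B"
    by (simp add: matrix_transpose_mul Suc)
  also have "\<dots> = mpow (transpose B) (Suc m)"
    by (simp only: mpow_eq_pow matrix_mult.pow_Suc_right)
  finally show ?case .
qed (simp add: transpose_mat)

lemma rank_mpow_stabilises: "\<exists>j. rank (mpow B (Suc j)) = rank (mpow B j)"
  for B :: "'a::field^'n^'n"
proof (rule ccontr)
  assume "\<nexists>j. rank (mpow B (Suc j)) = rank (mpow B j)"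
  then have decrease: "rank (mpow B (Suc j)) < rank (mpow B j)" for j
    using rank_mul_le_right_gen[of B "mpow B j"] by (simp add: le_less)
  have "rank (mpow B j) + j \<le> rank (mpow B 0)" for j
  proof (induct j)
    case (Suc j)
    then show ?case
      using decrease[of j] by linarith
  qed simp
  from this[of "Suc (rank (mpow B 0))"] show False
    by simp
qed

lemma rank_mpow_Suc_mat_index: "rank (mpow B (Suc (mat_index B))) = rank (mpow B (mat_index B))"
  for B :: "'a::field^'n^'n"
  unfolding mat_index_def by (rule LeastI_ex[OF rank_mpow_stabilises])

lemma mpow_left_factor:
  fixes B :: "'a::field^'n^'n"
  assumes "mat_index B \<le> k"
  shows "\<exists>Z. mpow B k = Z ** mpow B (Suc k)"
proof -
  have "rank (B ** mpow B (mat_index B)) = rank (mpow B (mat_index B))"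
    using rank_mpow_Suc_mat_index[of B] by simp
  then obtain Z where "mpow B (mat_index B) = Z ** (B ** mpow B (mat_index B))"
    by (rule rank_mult_eq_left_factor)
  then have "matrix_mult.pow B (mat_index B) = Z ** matrix_mult.pow B (Suc (mat_index B))"
    by (simp add: mpow_eq_pow matrix_mult.pow_Suc)
  then have "matrix_mult.pow B k = Z ** matrix_mult.pow B (Suc k)"
    using assms by (rule matrix_mult.left_factor_pow_mono)
  then show ?thesis
    by (auto simp: mpow_eq_pow)
qed

text \<open>Passing to the transpose avoids \<open>rank (transpose B) = rank B\<close>, which the library has only
  for real matrices; since the index of \<open>transpose B\<close> may exceed \<open>k\<close>, the right factorisation
  is obtained at a larger exponent and then brought down to \<open>k\<close>.\<close>
lemma mpow_right_factor:
  fixes B :: "'a::field^'n^'n"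
  assumes "mat_index B \<le> k"
  shows "\<exists>Y. mpow B k = mpow B (Suc k) ** Y"
proof -
  define m where "m = max k (mat_index (transpose B))"
  obtain Z where left: "mpow B k = Z ** mpow B (Suc k)"
    using mpow_left_factor[OF assms] by blast
  have "mat_index (transpose B) \<le> m"
    by (simp add: m_def)
  then obtain Z' where "mpow (transpose B) m = Z' ** mpow (transpose B) (Suc m)"
    using mpow_left_factor by blast
  then have "transpose (transpose (mpow B m)) = transpose (Z' ** transpose (mpow B (Suc m)))"
    by (simp only: transpose_mpow)
  then have right: "mpow B m = mpow B (Suc m) ** transpose Z'"
    by (simp only: matrix_transpose_mul transpose_transpose)
  have "k \<le> m"
    by (simp add: m_def)
  with left right have "matrix_mult.pow B k = matrix_mult.pow B (Suc k) ** transpose Z'"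
    unfolding mpow_eq_pow by (blast intro: matrix_mult.right_factor_pow_descend)
  then show ?thesis
    by (auto simp: mpow_eq_pow)
qed

section \<open>The M-product\<close>

lemma mode3_mode3: "mode3 N (mode3 M C) = mode3 (N ** M) C"
proof -
  have "(\<Sum>l\<in>UNIV. N $ k $ l * (\<Sum>m\<in>UNIV. M $ l $ m * c m))
      = (\<Sum>m\<in>UNIV. (\<Sum>l\<in>UNIV. N $ k $ l * M $ l $ m) * c m)" for k and c :: "_ \<Rightarrow> complex"
  proof -
    have "(\<Sum>l\<in>UNIV. N $ k $ l * (\<Sum>m\<in>UNIV. M $ l $ m * c m))
        = (\<Sum>l\<in>UNIV. \<Sum>m\<in>UNIV. N $ k $ l * M $ l $ m * c m)"
      by (simp add: sum_distrib_left mult.assoc)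
    also have "\<dots> = (\<Sum>m\<in>UNIV. \<Sum>l\<in>UNIV. N $ k $ l * M $ l $ m * c m)"
      by (rule sum.swap)
    finally show ?thesis
      by (simp add: sum_distrib_right)
  qed
  then show ?thesis
    by (simp add: mode3_def matrix_matrix_mult_def vec_eq_iff)
qed

lemma mode3_mat_1: "mode3 (mat 1) C = C"
  by (simp add: mode3_def vec_eq_iff mat_def if_distrib if_distribR cong del: if_weak_cong)

lemma matrix_inv_mult:
  assumes "invertible M"
  shows "M ** matrix_inv M = mat 1" and "matrix_inv M ** M = mat 1"
  using someI_ex[OF assms[unfolded invertible_def]] by (simp_all add: matrix_inv_def)

lemma that_matrix_inv:
  assumes "invertible M"
  shows "that M (that (matrix_inv M) T) = T" and "that (matrix_inv M) (that M T) = T"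
  by (simp_all add: that_def mode3_mode3 matrix_inv_mult[OF assms] mode3_mat_1)

lemma tensor_eqI:
  assumes "invertible M" and "\<And>i. that M S $ i = that M T $ i"
  shows "S = T"
  by (metis assms vec_eq_iff that_matrix_inv(2))

lemma that_THE_slices:
  assumes "invertible M"
  shows "that M (THE T. \<forall>i. that M T $ i = F i) $ i = F i"
proof -
  have "\<exists>!T. \<forall>i. that M T $ i = F i"
  proof
    show "\<forall>i. that M (that (matrix_inv M) (\<chi> i. F i)) $ i = F i"
      by (simp add: that_matrix_inv(1)[OF assms])
    show "T = that (matrix_inv M) (\<chi> i. F i)" if "\<forall>i. that M T $ i = F i" for T
      using that by (intro tensor_eqI[OF assms]) (simp add: that_matrix_inv(1)[OF assms])
  qed
  then show ?thesis
    by (rule theI'[THEN spec])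
qed

lemma that_mprod:
  "invertible M \<Longrightarrow> that M (mprod M C D) $ i = that M C $ i ** that M D $ i"
  unfolding mprod_def by (rule that_THE_slices)

lemma that_tid: "invertible M \<Longrightarrow> that M (tid M) $ i = mat 1"
  unfolding tid_def by (rule that_THE_slices)

lemma that_tpow: "invertible M \<Longrightarrow> that M (tpow M A m) $ i = mpow (that M A $ i) m"
  by (induct m) (simp_all add: that_mprod that_tid)

lemma monoid_mprod: "invertible M \<Longrightarrow> monoid (mprod M) (tid M)"
  by unfold_locales (auto intro: tensor_eqI simp: that_mprod that_tid matrix_mul_assoc)

lemma tpow_eq_pow: "invertible M \<Longrightarrow> tpow M A m = monoid.pow (mprod M) (tid M) A m"
  by (induct m) (simp_all add: monoid.pow_0 monoid.pow_Suc monoid_mprod)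

lemma mprod_left_factor_slicewise:
  assumes "invertible M" and "\<And>i. \<exists>Z. that M P $ i = Z ** that M Q $ i"
  shows "\<exists>T. P = mprod M T Q"
proof -
  obtain Z where "\<And>i. that M P $ i = Z i ** that M Q $ i"
    using assms(2) by metis
  then have "P = mprod M (that (matrix_inv M) (\<chi> i. Z i)) Q"
    by (intro tensor_eqI[OF assms(1)]) (simp add: assms(1) that_mprod that_matrix_inv)
  then show ?thesis ..
qed

lemma mprod_right_factor_slicewise:
  assumes "invertible M" and "\<And>i. \<exists>Y. that M P $ i = that M Q $ i ** Y"
  shows "\<exists>T. P = mprod M Q T"
proof -
  obtain Y where "\<And>i. that M P $ i = that M Q $ i ** Y i"
    using assms(2) by metis
  then have "P = mprod M Q (that (matrix_inv M) (\<chi> i. Y i))"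
    by (intro tensor_eqI[OF assms(1)]) (simp add: assms(1) that_mprod that_matrix_inv)
  then show ?thesis ..
qed

lemma tpow_factors:
  assumes "invertible M" and "tind M A \<le> k"
  shows "\<exists>Z. tpow M A k = mprod M Z (tpow M A (Suc k))"
    and "\<exists>Y. tpow M A k = mprod M (tpow M A (Suc k)) Y"
proof -
  have index_le: "mat_index (that M A $ i) \<le> k" for i
    using assms(2) unfolding tind_def by (meson Max_ge finite_imageI finite rangeI order_trans)
  show "\<exists>Z. tpow M A k = mprod M Z (tpow M A (Suc k))"
    by (rule mprod_left_factor_slicewise[OF assms(1)])
      (simp only: that_tpow[OF assms(1)] mpow_left_factor[OF index_le])
  show "\<exists>Y. tpow M A k = mprod M (tpow M A (Suc k)) Y"
    by (rule mprod_right_factor_slicewise[OF assms(1)])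
      (simp only: that_tpow[OF assms(1)] mpow_right_factor[OF index_le])
qed

lemma drazin_inverse_drazin:
  fixes M :: "complex^'k^'k" and A :: "complex^'n^'n^'k"
  assumes "invertible M"
  shows "monoid.drazin_inverse (mprod M) (tid M) A (tind M A) (drazin M A)"
proof -
  interpret tensor: monoid "mprod M :: complex^'n^'n^'k \<Rightarrow> _ \<Rightarrow> _" "tid M"
    by (rule monoid_mprod[OF assms])
  define k where "k = tind M A"
  obtain w where w: "tensor.drazin_inverse A k w"
    using tpow_factors[OF assms, of A k] tensor.drazin_inverse_exists
    unfolding k_def tpow_eq_pow[OF assms] by blast
  have "drazin M A = (THE w. tensor.drazin_inverse A k w)"
    by (simp only: drazin_def k_def tensor.drazin_inverse_def tpow_eq_pow[OF assms])
  also have "\<dots> = w"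
    using w tensor.drazin_inverse_unique by blast
  finally show ?thesis
    using w by (simp add: k_def)
qed

theorem theorem3p6:
  fixes M :: "complex^'k^'k" and A Am :: "complex^'n^'n^'k" and k :: nat
  assumes "invertible M"
    and "tind M A = k"
    and "Am \<in> one_inverses M A"
    and "mprod M (oneD M A Am) (oneD M A Am) = oneD M A Am"
  shows "(tpow M A k = tpow M A (k + 1) \<and> mprod M (drazin M A) (tpow M A k) = tpow M A k)
    \<and> (tpow M (oneD M A Am) k = mprod M (tpow M (oneD M A Am) k) A
       \<and> (\<forall>m::nat. m > 0 \<longrightarrow> tpow M (oneD M A Am) m = mprod M (tpow M (oneD M A Am) m) A))
    \<and> (\<forall>m::nat. m > 0 \<longrightarrow> oneD M A Am = mprod M (tpow M (oneD M A Am) m) (tpow M A m))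
    \<and> mprod M (tpow M A k) (oneD M A Am) = tpow M A k"
proof -
  interpret tensor: monoid "mprod M :: complex^'n^'n^'k \<Rightarrow> _ \<Rightarrow> _" "tid M"
    by (rule monoid_mprod[OF assms(1)])
  have "tensor.drazin_inverse A k (drazin M A)"
    using drazin_inverse_drazin[OF assms(1), of A] assms(2) by simp
  moreover have "mprod M (mprod M A Am) A = A"
    using assms(3) by (simp add: one_inverses_def)
  ultimately show ?thesis
    using assms(4) unfolding oneD_def tpow_eq_pow[OF assms(1)]
    by (rule tensor.one_drazin_idempotent_consequences)
qed

end
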